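(* Let $e_1\oplus e_2$ be a subexpression of the clique-width $k$-expression $e_G$ and let $C,N\in[0,\mathcal{N}]^{k\times q}$. Let $N_1\in[0,\mathcal{N}]^{k\times q}$ be defined by $N_1[i,a]=0$ for every $i\in\overline{\ell(e_1)}$ and every color $a$, and $N_1[i,a]=N[i,a]$ for every $i\notin\overline{\ell(e_1)}$ and every color $a$; define $N_2$ analogously with respect to $e_2$. Then $\lambda(e_1\oplus e_2,C,N)$ equals the minimum of $\lambda(e_1,C_1,N_1)\circledast\lambda(e_2,C_2,N_2)$ over all $C_1,C_2\in[0,\mathcal{N}]^{k\times q}$ such that $C_1[i,a]=0$ for all $i\in\overline{\ell(e_1)}$ and all $a$, $C_2[i,a]=0$ for all $i\in\overline{\ell(e_2)}$ and all $a$, and $C[i,a]=\min(\mathcal{N},C_1[i,a]+C_2[i,a])$ for all $i\in[1,k]$ and all $a\in\mathrm{Colors}$.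
   Context: Weight set: $(\mathrm{Weights},\preceq,\circledast)$ where $\preceq$ is a total order with a maximum element $\mathrm{Error}$, $\min$ is the minimum w.r.t. $\preceq$ (minimum of an empty set is $\mathrm{Error}$), and $\circledast$ is commutative, associative, has a neutral element, has absorbing element $\mathrm{Error}$, and satisfies $s_1\preceq s_2\Rightarrow s_1\circledast s_3\preceq s_2\circledast s_3$. A color-counting 1-locally checkable problem is given by a graph $G$, colors $\mathrm{Colors}=\{a_1,\ldots,a_q\}$, nonempty lists $L_v\subseteq\mathrm{Colors}$, weights $w_{v,a}\in\mathrm{Weights}\setminus\{\mathrm{Error}\}$ ($a\in L_v$), and a function $check(v,a,n_1,\ldots,n_q)\in\{\mathrm{True},\mathrm{False}\}$. $\mathcal{N}\in[1,|V(G)|]$ is an integer with $check(v,a,n_1,\ldots,n_q)=check(v,a,\min(\mathcal{N},n_1),\ldots,\min(\mathcal{N},n_q))$ always. $[x,y]=\{x,\ldots,y\}$. $e_G$ is an irredundant clique-width $k$-expression of $G$ (operations $i(v)$, $\oplus$, $\eta_{i,j}$, $\rho_{i\to j}$; irredundant means no join adds an already existing edge), in which every relabeling $\rho_{i\to j}(e)$ has some vertex of $G_e$ of label $j$. For a subexpression $e$, $G_e$ is its labeled graph, $\ell_e(v)$ the label of $v$ in $G_e$, and $\overline{\ell(e)}$ the set of labels in $[1,k]$ carried by no vertex of $G_e$. For $C,N\in[0,\mathcal{N}]^{k\times q}$ (rows = labels, columns = colors), a coloring $c$ of $G_e$ with $c(v)\in L_v$ for all $v$ is a $(C,N)$-coloring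 of $G_e$ if (C1) $\min(\mathcal{N},|\{v\in V(G_e): c(v)=a,\ \ell_e(v)=i\}|)=C[i,a]$ for all $i,a$; and (C2) for all $v\in V(G_e)$, $check(v,c(v),n_1,\ldots,n_q)$ holds with $n_j=\min(\mathcal{N},N[\ell_e(v),a_j]+|\{u\in N_{G_e}(v):c(u)=a_j\}|)$. $\lambda(e,C,N)$ is the minimum of $\circledast_{v\in V(G_e)}w_{v,c(v)}$ over all $(C,N)$-colorings $c$ of $G_e$ ($\mathrm{Error}$ if none). *)

theory Defs
  imports Main
begin

definition weight_set :: "'w::linorder \<Rightarrow> ('w \<Rightarrow> 'w \<Rightarrow> 'w) \<Rightarrow> 'w \<Rightarrow> bool" where
  "weight_set Err op neut \<longleftrightarrow>
     (\<forall>s. s \<le> Err) \<and>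
     (\<forall>s t. op s t = op t s) \<and>
     (\<forall>s t u. op (op s t) u = op s (op t u)) \<and>
     (\<forall>s. op neut s = s) \<and>
     (\<forall>s. op Err s = Err) \<and>
     (\<forall>s1 s2 s3. s1 \<le> s2 \<longrightarrow> op s1 s3 \<le> op s2 s3)"

definition wmin :: "'w::linorder \<Rightarrow> 'w set \<Rightarrow> 'w" where
  "wmin Err S = (if S = {} then Err else Min S)"

definition wprod :: "('w \<Rightarrow> 'w \<Rightarrow> 'w) \<Rightarrow> 'w \<Rightarrow> ('v \<Rightarrow> 'w) \<Rightarrow> 'v set \<Rightarrow> 'w" where
  "wprod op neut g V = Finite_Set.fold (\<lambda>x acc. op (g x) acc) neut V"

datatype 'v cwexp =
    Vertex nat 'v
  | Union "'v cwexp" "'v cwexp"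
  | Join nat nat "'v cwexp"
  | Relabel nat nat "'v cwexp"

fun verts :: "'v cwexp \<Rightarrow> 'v set" where
  "verts (Vertex i v) = {v}"
| "verts (Union e1 e2) = verts e1 \<union> verts e2"
| "verts (Join i j e) = verts e"
| "verts (Relabel i j e) = verts e"

fun lab :: "'v cwexp \<Rightarrow> 'v \<Rightarrow> nat" where
  "lab (Vertex i v) u = i"
| "lab (Union e1 e2) u = (if u \<in> verts e1 then lab e1 u else lab e2 u)"
| "lab (Join i j e) u = lab e u"
| "lab (Relabel i j e) u = (if lab e u = i then j else lab e u)"

fun adj :: "'v cwexp \<Rightarrow> 'v \<Rightarrow> 'v \<Rightarrow> bool" where
  "adj (Vertex i v) x y = False"
| "adj (Union e1 e2) x y = (adj e1 x y \<or> adj e2 x y)"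
| "adj (Join i j e) x y = (adj e x y \<or>
     (x \<in> verts e \<and> y \<in> verts e \<and>
      ((lab e x = i \<and> lab e y = j) \<or> (lab e x = j \<and> lab e y = i))))"
| "adj (Relabel i j e) x y = adj e x y"

fun wf_cw :: "nat \<Rightarrow> 'v cwexp \<Rightarrow> bool" where
  "wf_cw k (Vertex i v) = (i \<in> {1..k})"
| "wf_cw k (Union e1 e2) = (wf_cw k e1 \<and> wf_cw k e2 \<and> verts e1 \<inter> verts e2 = {})"
| "wf_cw k (Join i j e) = (i \<in> {1..k} \<and> j \<in> {1..k} \<and> i \<noteq> j \<and> wf_cw k e)"
| "wf_cw k (Relabel i j e) = (i \<in> {1..k} \<and> j \<in> {1..k} \<and> wf_cw k e)"

fun irredundant :: "'v cwexp \<Rightarrow> bool" where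
  "irredundant (Vertex i v) = True"
| "irredundant (Union e1 e2) = (irredundant e1 \<and> irredundant e2)"
| "irredundant (Join i j e) = (irredundant e \<and>
     \<not> (\<exists>x\<in>verts e. \<exists>y\<in>verts e. adj e x y \<and> lab e x = i \<and> lab e y = j))"
| "irredundant (Relabel i j e) = irredundant e"

fun relabel_ok :: "'v cwexp \<Rightarrow> bool" where
  "relabel_ok (Vertex i v) = True"
| "relabel_ok (Union e1 e2) = (relabel_ok e1 \<and> relabel_ok e2)"
| "relabel_ok (Join i j e) = relabel_ok e"
| "relabel_ok (Relabel i j e) = (relabel_ok e \<and> (\<exists>v\<in>verts e. lab e v = j))"

fun subexprs :: "'v cwexp \<Rightarrow> 'v cwexp set" where
  "subexprs (Vertex i v) = {Vertex i v}"
| "subexprs (Union e1 e2) = insert (Union e1 e2) (subexprs e1 \<union> subexprs e2)"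
| "subexprs (Join i j e) = insert (Join i j e) (subexprs e)"
| "subexprs (Relabel i j e) = insert (Relabel i j e) (subexprs e)"

definition absent_labels :: "nat \<Rightarrow> 'v cwexp \<Rightarrow> nat set" where
  "absent_labels k e = {i \<in> {1..k}. \<not> (\<exists>v\<in>verts e. lab e v = i)}"

definition is_mat :: "nat \<Rightarrow> nat \<Rightarrow> nat \<Rightarrow> (nat \<Rightarrow> nat \<Rightarrow> nat) \<Rightarrow> bool" where
  "is_mat k q NN M \<longleftrightarrow> (\<forall>i a. M i a \<le> NN \<and> ((i \<notin> {1..k} \<or> a \<notin> {1..q}) \<longrightarrow> M i a = 0))"

definition is_CN_coloring ::
  "nat \<Rightarrow> nat \<Rightarrow> nat \<Rightarrow> ('v \<Rightarrow> nat set) \<Rightarrow> ('v \<Rightarrow> nat \<Rightarrow> nat list \<Rightarrow> bool)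
   \<Rightarrow> 'v cwexp \<Rightarrow> (nat \<Rightarrow> nat \<Rightarrow> nat) \<Rightarrow> (nat \<Rightarrow> nat \<Rightarrow> nat) \<Rightarrow> ('v \<Rightarrow> nat) \<Rightarrow> bool" where
  "is_CN_coloring k q NN L check e C N c \<longleftrightarrow>
     (\<forall>v\<in>verts e. c v \<in> L v) \<and>
     (\<forall>i\<in>{1..k}. \<forall>a\<in>{1..q}.
        min NN (card {v \<in> verts e. c v = a \<and> lab e v = i}) = C i a) \<and>
     (\<forall>v\<in>verts e. check v (c v)
        (map (\<lambda>j. min NN (N (lab e v) j + card {u \<in> verts e. adj e v u \<and> c u = j})) [1..<q+1]))"

definition lam ::
  "'w::linorder \<Rightarrow> ('w \<Rightarrow> 'w \<Rightarrow> 'w) \<Rightarrow> 'w \<Rightarrow> ('v \<Rightarrow> nat \<Rightarrow> 'w)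
   \<Rightarrow> nat \<Rightarrow> nat \<Rightarrow> nat \<Rightarrow> ('v \<Rightarrow> nat set) \<Rightarrow> ('v \<Rightarrow> nat \<Rightarrow> nat list \<Rightarrow> bool)
   \<Rightarrow> 'v cwexp \<Rightarrow> (nat \<Rightarrow> nat \<Rightarrow> nat) \<Rightarrow> (nat \<Rightarrow> nat \<Rightarrow> nat) \<Rightarrow> 'w" where
  "lam Err op neut w k q NN L check e C N =
     wmin Err ((\<lambda>c. wprod op neut (\<lambda>v. w v (c v)) (verts e)) `
               {c. is_CN_coloring k q NN L check e C N c})"

end

theory Submission
  imports Defs "HOL-Library.FuncSet"
begin

(* The union adds no edges, so a coloring of e1 \<oplus> e2 is a pair of colorings of e1 and e2 in
   which every vertex sees the same neighbours as before; its label classes are disjoint unions,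
   so C is the truncated sum of the two count matrices. Rows of N for labels absent from e_i are
   never read, which is why they may be reset to 0. Weights multiply over the disjoint union, and
   since the product is monotone with Error absorbing, minimising over colorings of e1 \<oplus> e2 is
   minimising over both parts separately. *)

lemma finite_verts [simp]: "finite (verts e)"
  by (induction e) auto

lemma adj_verts: "adj e x y \<Longrightarrow> x \<in> verts e \<and> y \<in> verts e"
  by (induction e) auto

lemma wf_cw_subexprs: "e' \<in> subexprs e \<Longrightarrow> wf_cw k e \<Longrightarrow> wf_cw k e'"
  by (induction e) auto

lemma verts_subexprs: "e' \<in> subexprs e \<Longrightarrow> verts e' \<subseteq> verts e"
  by (induction e) auto

lemma lab_notin_absent_labels: "v \<in> verts e \<Longrightarrow> lab e v \<notin> absent_labels k e"
  unfolding absent_labels_def by auto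

lemma lab_Union_part:
  assumes "verts e1 \<inter> verts e2 = {}" "e \<in> {e1, e2}" "v \<in> verts e"
  shows "lab (Union e1 e2) v = lab e v"
  using assms by auto

lemma neighbours_Union_part:
  assumes "verts e1 \<inter> verts e2 = {}" "e \<in> {e1, e2}" "v \<in> verts e"
  shows "{u \<in> verts (Union e1 e2). adj (Union e1 e2) v u \<and> P u} = {u \<in> verts e. adj e v u \<and> P u}"
  using assms adj_verts[of e1 v] adj_verts[of e2 v] by auto

lemma card_label_class_Union:
  assumes "verts e1 \<inter> verts e2 = {}"
  shows "card {v \<in> verts (Union e1 e2). c v = a \<and> lab (Union e1 e2) v = i} =
    card {v \<in> verts e1. c v = a \<and> lab e1 v = i} + card {v \<in> verts e2. c v = a \<and> lab e2 v = i}"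
proof -
  have "{v \<in> verts (Union e1 e2). c v = a \<and> lab (Union e1 e2) v = i} =
      {v \<in> verts e1. c v = a \<and> lab e1 v = i} \<union> {v \<in> verts e2. c v = a \<and> lab e2 v = i}"
    using assms by auto
  then show ?thesis
    using assms by (simp add: card_Un_disjoint disjoint_iff)
qed

section \<open>Colorings of a disjoint union\<close>

definition color_count_matrix :: "nat \<Rightarrow> nat \<Rightarrow> nat \<Rightarrow> 'v cwexp \<Rightarrow> ('v \<Rightarrow> nat) \<Rightarrow> nat \<Rightarrow> nat \<Rightarrow> nat" where
  "color_count_matrix k q NN e c i a =
     (if i \<in> {1..k} \<and> a \<in> {1..q} then min NN (card {v \<in> verts e. c v = a \<and> lab e v = i}) else 0)"

lemma is_mat_color_count_matrix: "is_mat k q NN (color_count_matrix k q NN e c)"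
  unfolding is_mat_def color_count_matrix_def by auto

lemma color_count_matrix_absent:
  assumes "i \<in> absent_labels k e"
  shows "color_count_matrix k q NN e c i a = 0"
proof -
  have "card {v \<in> verts e. c v = a \<and> lab e v = i} = 0"
    using assms unfolding absent_labels_def by auto
  then show ?thesis
    unfolding color_count_matrix_def by (simp only: min_0R if_cancel)
qed

lemma is_CN_coloring_cong:
  assumes "\<forall>v\<in>verts e. c v = c' v"
  shows "is_CN_coloring k q NN L check e C N c = is_CN_coloring k q NN L check e C N c'"
proof -
  have "{u \<in> verts e. adj e v u \<and> c u = j} = {u \<in> verts e. adj e v u \<and> c' u = j}" for v j
    using assms by auto
  moreover have "{v \<in> verts e. c v = a \<and> lab e v = i} = {v \<in> verts e. c' v = a \<and> lab e v = i}" for a i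
    using assms by auto
  ultimately show ?thesis
    using assms unfolding is_CN_coloring_def by simp
qed

lemma is_CN_coloring_Union_restrict:
  assumes disj: "verts e1 \<inter> verts e2 = {}" and e: "e \<in> {e1, e2}"
    and N': "\<forall>v\<in>verts e. N' (lab e v) = N (lab e v)"
    and c: "is_CN_coloring k q NN L check (Union e1 e2) C N c"
  shows "is_CN_coloring k q NN L check e (color_count_matrix k q NN e c) N' c"
  unfolding is_CN_coloring_def
proof (intro conjI ballI)
  fix v assume v: "v \<in> verts e"
  then have "v \<in> verts (Union e1 e2)" using e by auto
  then show "c v \<in> L v"
    using c unfolding is_CN_coloring_def by blast
  have "check v (c v) (map (\<lambda>j. min NN (N (lab (Union e1 e2) v) j +
      card {u \<in> verts (Union e1 e2). adj (Union e1 e2) v u \<and> c u = j})) [1..<q+1])"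
    using c \<open>v \<in> verts (Union e1 e2)\<close> unfolding is_CN_coloring_def by blast
  then show "check v (c v) (map (\<lambda>j. min NN (N' (lab e v) j + card {u \<in> verts e. adj e v u \<and> c u = j})) [1..<q+1])"
    by (simp only: lab_Union_part[OF disj e v] neighbours_Union_part[OF disj e v] N'[rule_format, OF v])
qed (simp add: color_count_matrix_def)

lemma is_CN_coloring_Union_glue:
  assumes disj: "verts e1 \<inter> verts e2 = {}"
    and N1: "\<forall>v\<in>verts e1. N1 (lab e1 v) = N (lab e1 v)"
    and N2: "\<forall>v\<in>verts e2. N2 (lab e2 v) = N (lab e2 v)"
    and c1: "is_CN_coloring k q NN L check e1 C1 N1 c"
    and c2: "is_CN_coloring k q NN L check e2 C2 N2 c"
    and C: "\<forall>i\<in>{1..k}. \<forall>a\<in>{1..q}. C i a = min NN (C1 i a + C2 i a)"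
  shows "is_CN_coloring k q NN L check (Union e1 e2) C N c"
  unfolding is_CN_coloring_def
proof (intro conjI ballI)
  fix v assume v: "v \<in> verts (Union e1 e2)"
  then show "c v \<in> L v"
    using c1 c2 unfolding is_CN_coloring_def by auto
  show "check v (c v) (map (\<lambda>j. min NN (N (lab (Union e1 e2) v) j +
      card {u \<in> verts (Union e1 e2). adj (Union e1 e2) v u \<and> c u = j})) [1..<q+1])"
  proof -
    obtain e C' N' where e: "e \<in> {e1, e2}" "v \<in> verts e"
      and "is_CN_coloring k q NN L check e C' N' c" and N': "N' (lab e v) = N (lab e v)"
    proof -
      from v consider "v \<in> verts e1" | "v \<in> verts e2" by auto
      then show thesis
        using that N1 N2 c1 c2 by cases blast+
    qed
    then have "check v (c v) (map (\<lambda>j. min NN (N' (lab e v) j + card {u \<in> verts e. adj e v u \<and> c u = j})) [1..<q+1])"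
      unfolding is_CN_coloring_def by blast
    then show ?thesis
      by (simp only: lab_Union_part[OF disj e] neighbours_Union_part[OF disj e] N')
  qed
next
  fix i a assume i: "i \<in> {1..k}" and a: "a \<in> {1..q}"
  have "min NN (card {v \<in> verts (Union e1 e2). c v = a \<and> lab (Union e1 e2) v = i}) =
      min NN (min NN (card {v \<in> verts e1. c v = a \<and> lab e1 v = i}) +
              min NN (card {v \<in> verts e2. c v = a \<and> lab e2 v = i}))"
    unfolding card_label_class_Union[OF disj] by simp
  also have "\<dots> = C i a"
    using c1 c2 C i a unfolding is_CN_coloring_def by simp
  finally show "min NN (card {v \<in> verts (Union e1 e2). c v = a \<and> lab (Union e1 e2) v = i}) = C i a" .
qed

section \<open>Weights and minima\<close>

lemma weight_set_Err_top: "weight_set Err op neut \<Longrightarrow> s \<le> Err"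
  unfolding weight_set_def by blast

lemma weight_set_Err_absorbing:
  assumes "weight_set Err op neut"
  shows "op Err s = Err" "op s Err = Err"
  using assms unfolding weight_set_def by metis+

lemma weight_set_op_mono:
  assumes ws: "weight_set Err op neut" and "s \<le> s'" "t \<le> t'"
  shows "op s t \<le> op s' t'"
proof -
  have mono: "s1 \<le> s2 \<Longrightarrow> op s1 s3 \<le> op s2 s3" and comm: "op s3 s1 = op s1 s3" for s1 s2 s3
    using ws unfolding weight_set_def by blast+
  have "op s t \<le> op s' t" using mono \<open>s \<le> s'\<close> .
  also have "\<dots> \<le> op s' t'" using mono[OF \<open>t \<le> t'\<close>] comm by metis
  finally show ?thesis .
qed

lemma weight_set_comm_monoid_set: "weight_set Err op neut \<Longrightarrow> comm_monoid_set op neut"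
  unfolding weight_set_def comm_monoid_set_def by unfold_locales auto

lemma wprod_eq_F: "weight_set Err op neut \<Longrightarrow> wprod op neut g V = comm_monoid_set.F op neut g V"
  unfolding wprod_def comm_monoid_set.eq_fold[OF weight_set_comm_monoid_set] comp_def ..

definition coloring_weight :: "('w \<Rightarrow> 'w \<Rightarrow> 'w) \<Rightarrow> 'w \<Rightarrow> ('v \<Rightarrow> nat \<Rightarrow> 'w) \<Rightarrow> 'v cwexp \<Rightarrow> ('v \<Rightarrow> nat) \<Rightarrow> 'w" where
  "coloring_weight op neut w e c = wprod op neut (\<lambda>v. w v (c v)) (verts e)"

lemma lam_eq_wmin_coloring_weight:
  "lam Err op neut w k q NN L check e C N =
     wmin Err (coloring_weight op neut w e ` {c. is_CN_coloring k q NN L check e C N c})"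
  unfolding lam_def coloring_weight_def ..

lemma coloring_weight_cong:
  "weight_set Err op neut \<Longrightarrow> \<forall>v\<in>verts e. c v = c' v \<Longrightarrow>
     coloring_weight op neut w e c = coloring_weight op neut w e c'"
  unfolding coloring_weight_def wprod_eq_F
  by (rule comm_monoid_set.cong[OF weight_set_comm_monoid_set]) auto

lemma coloring_weight_Union:
  assumes ws: "weight_set Err op neut" and disj: "verts e1 \<inter> verts e2 = {}"
  shows "coloring_weight op neut w (Union e1 e2) c =
    op (coloring_weight op neut w e1 c) (coloring_weight op neut w e2 c)"
  unfolding coloring_weight_def wprod_eq_F[OF ws] verts.simps
  by (rule comm_monoid_set.union_disjoint[OF weight_set_comm_monoid_set[OF ws]]) (simp_all add: disj)

lemma finite_coloring_weights:
  assumes ws: "weight_set Err op neut" and L: "\<forall>v\<in>verts e. finite (L v)"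
  shows "finite (coloring_weight op neut w e ` {c. \<forall>v\<in>verts e. c v \<in> L v})"
proof -
  have "coloring_weight op neut w e ` {c. \<forall>v\<in>verts e. c v \<in> L v} \<subseteq>
      coloring_weight op neut w e ` PiE (verts e) L"
  proof
    fix x assume "x \<in> coloring_weight op neut w e ` {c. \<forall>v\<in>verts e. c v \<in> L v}"
    then obtain c where c: "\<forall>v\<in>verts e. c v \<in> L v" and x: "x = coloring_weight op neut w e c"
      by blast
    have "restrict c (verts e) \<in> PiE (verts e) L" using c by auto
    moreover have "x = coloring_weight op neut w e (restrict c (verts e))"
      unfolding x by (rule coloring_weight_cong[OF ws]) simp
    ultimately show "x \<in> coloring_weight op neut w e ` PiE (verts e) L" by blast
  qed
  moreover have "finite (PiE (verts e) L)" using L by (simp add: finite_PiE)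
  ultimately show ?thesis by (meson finite_imageI finite_subset)
qed

lemma finite_CN_coloring_weights:
  assumes "weight_set Err op neut" "\<forall>v\<in>verts e. finite (L v)"
  shows "finite (coloring_weight op neut w e ` {c. is_CN_coloring k q NN L check e C N c})"
  by (rule finite_subset[OF _ finite_coloring_weights[OF assms]]) (auto simp: is_CN_coloring_def)

lemma lam_le_coloring_weight:
  assumes "weight_set Err op neut" "\<forall>v\<in>verts e. finite (L v)"
    and "is_CN_coloring k q NN L check e C N c"
  shows "lam Err op neut w k q NN L check e C N \<le> coloring_weight op neut w e c"
  using finite_CN_coloring_weights[OF assms(1,2)] assms(3)
  unfolding lam_eq_wmin_coloring_weight wmin_def by auto

lemma lam_cases:
  assumes "weight_set Err op neut" "\<forall>v\<in>verts e. finite (L v)"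
  obtains (no_coloring) "lam Err op neut w k q NN L check e C N = Err"
  | (optimal) c where "is_CN_coloring k q NN L check e C N c"
      "lam Err op neut w k q NN L check e C N = coloring_weight op neut w e c"
proof (cases "{c. is_CN_coloring k q NN L check e C N c} = {}")
  case True
  then show thesis
    using that(1) unfolding lam_eq_wmin_coloring_weight wmin_def by simp
next
  case False
  then have "lam Err op neut w k q NN L check e C N \<in>
      coloring_weight op neut w e ` {c. is_CN_coloring k q NN L check e C N c}"
    using Min_in[OF finite_CN_coloring_weights[OF assms]]
    unfolding lam_eq_wmin_coloring_weight wmin_def by simp
  then show thesis
    using that(2) by blast
qed

lemma lam_mem_coloring_weights:
  assumes "weight_set Err op neut" "\<forall>v\<in>verts e. finite (L v)"
  shows "lam Err op neut w k q NN L check e C N \<in>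
    insert Err (coloring_weight op neut w e ` {c. \<forall>v\<in>verts e. c v \<in> L v})"
  by (cases rule: lam_cases[OF assms, where w = w and k = k and q = q and NN = NN and check = check
        and C = C and N = N]) (auto simp: is_CN_coloring_def)

lemma wmin_le: "finite S \<Longrightarrow> x \<in> S \<Longrightarrow> wmin Err S \<le> x"
  unfolding wmin_def by auto

lemma wmin_eqI:
  assumes fin: "finite S" "finite R" and top: "\<And>x. x \<le> Err"
    and R: "R \<subseteq> insert Err S" and S: "\<And>s. s \<in> S \<Longrightarrow> \<exists>r\<in>R. r \<le> s"
  shows "wmin Err S = wmin Err R"
proof (rule antisym)
  show "wmin Err S \<le> wmin Err R"
  proof (cases "R = {}")
    case False
    then have "wmin Err R \<in> insert Err S"
      using R Min_in[OF fin(2)] unfolding wmin_def by auto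
    then show ?thesis
      using top wmin_le[OF fin(1)] by auto
  qed (simp add: wmin_def top)
  show "wmin Err R \<le> wmin Err S"
  proof (cases "S = {}")
    case False
    then have "wmin Err S \<in> S"
      using Min_in[OF fin(1)] unfolding wmin_def by simp
    then obtain r where "r \<in> R" "r \<le> wmin Err S"
      using S by blast
    then show ?thesis
      using wmin_le[OF fin(2)] order_trans by blast
  qed (simp add: wmin_def top)
qed

section \<open>The union step\<close>

definition split_count_matrices ::
  "nat \<Rightarrow> nat \<Rightarrow> nat \<Rightarrow> 'v cwexp \<Rightarrow> 'v cwexp \<Rightarrow> (nat \<Rightarrow> nat \<Rightarrow> nat) \<Rightarrow> (nat \<Rightarrow> nat \<Rightarrow> nat)
     \<Rightarrow> (nat \<Rightarrow> nat \<Rightarrow> nat) \<Rightarrow> bool" where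
  "split_count_matrices k q NN e1 e2 C C1 C2 \<longleftrightarrow>
     is_mat k q NN C1 \<and> is_mat k q NN C2 \<and>
     (\<forall>i\<in>absent_labels k e1. \<forall>a\<in>{1..q}. C1 i a = 0) \<and>
     (\<forall>i\<in>absent_labels k e2. \<forall>a\<in>{1..q}. C2 i a = 0) \<and>
     (\<forall>i\<in>{1..k}. \<forall>a\<in>{1..q}. C i a = min NN (C1 i a + C2 i a))"

lemma op_lam_attained_on_Union:
  assumes ws: "weight_set Err op neut" and disj: "verts e1 \<inter> verts e2 = {}"
    and fin: "\<forall>v\<in>verts (Union e1 e2). finite (L v)"
    and N1: "\<forall>v\<in>verts e1. N1 (lab e1 v) = N (lab e1 v)"
    and N2: "\<forall>v\<in>verts e2. N2 (lab e2 v) = N (lab e2 v)"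
    and C: "\<forall>i\<in>{1..k}. \<forall>a\<in>{1..q}. C i a = min NN (C1 i a + C2 i a)"
  shows "op (lam Err op neut w k q NN L check e1 C1 N1) (lam Err op neut w k q NN L check e2 C2 N2) \<in>
    insert Err (coloring_weight op neut w (Union e1 e2) ` {c. is_CN_coloring k q NN L check (Union e1 e2) C N c})"
proof -
  have fin1: "\<forall>v\<in>verts e1. finite (L v)" and fin2: "\<forall>v\<in>verts e2. finite (L v)"
    using fin by auto
  show ?thesis
  proof (cases rule: lam_cases[OF ws fin1, where w = w and k = k and q = q and NN = NN
        and check = check and C = C1 and N = N1, case_names no_coloring optimal])
    case c1: (optimal c1)
    show ?thesis
    proof (cases rule: lam_cases[OF ws fin2, where w = w and k = k and q = q and NN = NN
          and check = check and C = C2 and N = N2, case_names no_coloring optimal])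
      case c2: (optimal c2)
      define c where "c v = (if v \<in> verts e1 then c1 v else c2 v)" for v
      have on1: "\<forall>v\<in>verts e1. c v = c1 v" and on2: "\<forall>v\<in>verts e2. c v = c2 v"
        using disj unfolding c_def by auto
      have "is_CN_coloring k q NN L check (Union e1 e2) C N c"
        using is_CN_coloring_Union_glue[OF disj N1 N2 _ _ C] c1(1) c2(1)
          is_CN_coloring_cong[OF on1] is_CN_coloring_cong[OF on2]
        by blast
      moreover have "coloring_weight op neut w (Union e1 e2) c =
          op (lam Err op neut w k q NN L check e1 C1 N1) (lam Err op neut w k q NN L check e2 C2 N2)"
        using coloring_weight_Union[OF ws disj] coloring_weight_cong[OF ws on1] coloring_weight_cong[OF ws on2]
          c1(2) c2(2)
        by simp
      ultimately show ?thesis by force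
    qed (simp add: weight_set_Err_absorbing[OF ws])
  qed (simp add: weight_set_Err_absorbing[OF ws])
qed

lemma Union_coloring_weight_dominated:
  assumes ws: "weight_set Err op neut" and disj: "verts e1 \<inter> verts e2 = {}"
    and fin: "\<forall>v\<in>verts (Union e1 e2). finite (L v)"
    and N1: "\<forall>v\<in>verts e1. N1 (lab e1 v) = N (lab e1 v)"
    and N2: "\<forall>v\<in>verts e2. N2 (lab e2 v) = N (lab e2 v)"
    and c: "is_CN_coloring k q NN L check (Union e1 e2) C N c"
  shows "\<exists>C1 C2. split_count_matrices k q NN e1 e2 C C1 C2 \<and>
    op (lam Err op neut w k q NN L check e1 C1 N1) (lam Err op neut w k q NN L check e2 C2 N2)
      \<le> coloring_weight op neut w (Union e1 e2) c"
proof (intro exI conjI)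
  let ?C1 = "color_count_matrix k q NN e1 c" and ?C2 = "color_count_matrix k q NN e2 c"
  have fin1: "\<forall>v\<in>verts e1. finite (L v)" and fin2: "\<forall>v\<in>verts e2. finite (L v)"
    using fin by auto
  have "C i a = min NN (?C1 i a + ?C2 i a)" if "i \<in> {1..k}" "a \<in> {1..q}" for i a
  proof -
    have "min NN (card {v \<in> verts (Union e1 e2). c v = a \<and> lab (Union e1 e2) v = i}) = C i a"
      using c that unfolding is_CN_coloring_def by blast
    then show ?thesis
      using that unfolding card_label_class_Union[OF disj] color_count_matrix_def by simp
  qed
  then show "split_count_matrices k q NN e1 e2 C ?C1 ?C2"
    unfolding split_count_matrices_def
    by (simp add: is_mat_color_count_matrix color_count_matrix_absent)
  have "lam Err op neut w k q NN L check e1 ?C1 N1 \<le> coloring_weight op neut w e1 c"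
    by (rule lam_le_coloring_weight[OF ws fin1 is_CN_coloring_Union_restrict[OF disj _ N1 c]]) simp
  moreover have "lam Err op neut w k q NN L check e2 ?C2 N2 \<le> coloring_weight op neut w e2 c"
    by (rule lam_le_coloring_weight[OF ws fin2 is_CN_coloring_Union_restrict[OF disj _ N2 c]]) simp
  ultimately show "op (lam Err op neut w k q NN L check e1 ?C1 N1) (lam Err op neut w k q NN L check e2 ?C2 N2)
      \<le> coloring_weight op neut w (Union e1 e2) c"
    unfolding coloring_weight_Union[OF ws disj] by (rule weight_set_op_mono[OF ws])
qed

lemma lam_Union:
  assumes ws: "weight_set Err op neut" and disj: "verts e1 \<inter> verts e2 = {}"
    and fin: "\<forall>v\<in>verts (Union e1 e2). finite (L v)"
    and N1: "\<And>i. i \<notin> absent_labels k e1 \<Longrightarrow> N1 i = N i"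
    and N2: "\<And>i. i \<notin> absent_labels k e2 \<Longrightarrow> N2 i = N i"
  shows "lam Err op neut w k q NN L check (Union e1 e2) C N =
    wmin Err {op (lam Err op neut w k q NN L check e1 C1 N1) (lam Err op neut w k q NN L check e2 C2 N2)
      | C1 C2. split_count_matrices k q NN e1 e2 C C1 C2}"
    (is "_ = wmin Err ?R")
proof -
  let ?S = "coloring_weight op neut w (Union e1 e2) ` {c. is_CN_coloring k q NN L check (Union e1 e2) C N c}"
  let ?W = "\<lambda>e. insert Err (coloring_weight op neut w e ` {c. \<forall>v\<in>verts e. c v \<in> L v})"
  have fin1: "\<forall>v\<in>verts e1. finite (L v)" and fin2: "\<forall>v\<in>verts e2. finite (L v)"
    using fin by auto
  have N1': "\<forall>v\<in>verts e1. N1 (lab e1 v) = N (lab e1 v)" and N2': "\<forall>v\<in>verts e2. N2 (lab e2 v) = N (lab e2 v)"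
    by (simp_all add: N1 N2 lab_notin_absent_labels)
  have "?R \<subseteq> {op x y | x y. x \<in> ?W e1 \<and> y \<in> ?W e2}"
    using lam_mem_coloring_weights[OF ws fin1, where w = w and k = k and q = q and NN = NN and check = check]
      lam_mem_coloring_weights[OF ws fin2, where w = w and k = k and q = q and NN = NN and check = check]
    by blast
  then have fin_R: "finite ?R"
    by (rule finite_subset) (simp add: finite_image_set2 finite_coloring_weights[OF ws fin1]
        finite_coloring_weights[OF ws fin2])
  have R_sub: "?R \<subseteq> insert Err ?S"
  proof
    fix r assume "r \<in> ?R"
    then obtain C1 C2 where "split_count_matrices k q NN e1 e2 C C1 C2"
      and "r = op (lam Err op neut w k q NN L check e1 C1 N1) (lam Err op neut w k q NN L check e2 C2 N2)"
      by blast
    then show "r \<in> insert Err ?S"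
      using op_lam_attained_on_Union[OF ws disj fin N1' N2'] by (simp add: split_count_matrices_def)
  qed
  have S_dom: "\<exists>r\<in>?R. r \<le> s" if "s \<in> ?S" for s
  proof -
    obtain c where c: "is_CN_coloring k q NN L check (Union e1 e2) C N c"
      and s: "s = coloring_weight op neut w (Union e1 e2) c"
      using \<open>s \<in> ?S\<close> by blast
    obtain C1 C2 where "split_count_matrices k q NN e1 e2 C C1 C2"
      and "op (lam Err op neut w k q NN L check e1 C1 N1) (lam Err op neut w k q NN L check e2 C2 N2) \<le> s"
      using Union_coloring_weight_dominated[OF ws disj fin N1' N2' c] unfolding s by blast
    then show ?thesis by blast
  qed
  have "wmin Err ?S = wmin Err ?R"
    by (rule wmin_eqI[OF finite_CN_coloring_weights[OF ws fin] fin_R weight_set_Err_top[OF ws] R_sub S_dom])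
  then show ?thesis
    by (simp only: lam_eq_wmin_coloring_weight[where e = "Union e1 e2"])
qed

theorem lemma3:
  fixes Err :: "'w::linorder" and op :: "'w \<Rightarrow> 'w \<Rightarrow> 'w" and neut :: 'w
    and w :: "'v \<Rightarrow> nat \<Rightarrow> 'w"
    and k q NN :: nat and L :: "'v \<Rightarrow> nat set" and check :: "'v \<Rightarrow> nat \<Rightarrow> nat list \<Rightarrow> bool"
    and eG e1 e2 :: "'v cwexp" and C N :: "nat \<Rightarrow> nat \<Rightarrow> nat"
  assumes ws: "weight_set Err op neut"
    and lists: "\<forall>v\<in>verts eG. L v \<noteq> {} \<and> L v \<subseteq> {1..q}"
    and weights: "\<forall>v\<in>verts eG. \<forall>a\<in>L v. w v a \<noteq> Err"
    and NN: "1 \<le> NN" "NN \<le> card (verts eG)"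
    and check_inv: "\<forall>v a ns. length ns = q \<longrightarrow> check v a ns = check v a (map (min NN) ns)"
    and wf: "wf_cw k eG" and irr: "irredundant eG" and rel: "relabel_ok eG"
    and sub: "Union e1 e2 \<in> subexprs eG"
    and C: "is_mat k q NN C" and N: "is_mat k q NN N"
  shows "lam Err op neut w k q NN L check (Union e1 e2) C N =
    wmin Err {op (lam Err op neut w k q NN L check e1 C1
                    (\<lambda>i a. if i \<in> absent_labels k e1 then 0 else N i a))
                 (lam Err op neut w k q NN L check e2 C2
                    (\<lambda>i a. if i \<in> absent_labels k e2 then 0 else N i a)) | C1 C2.
       is_mat k q NN C1 \<and> is_mat k q NN C2 \<and>
       (\<forall>i\<in>absent_labels k e1. \<forall>a\<in>{1..q}. C1 i a = 0) \<and>
       (\<forall>i\<in>absent_labels k e2. \<forall>a\<in>{1..q}. C2 i a = 0) \<and>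
       (\<forall>i\<in>{1..k}. \<forall>a\<in>{1..q}. C i a = min NN (C1 i a + C2 i a))}"
proof -
  have "verts e1 \<inter> verts e2 = {}"
    using wf_cw_subexprs[OF sub wf] by simp
  moreover have "\<forall>v\<in>verts (Union e1 e2). finite (L v)"
    using lists verts_subexprs[OF sub] by (meson finite_atLeastAtMost finite_subset subsetD)
  ultimately show ?thesis
    by (rule lam_Union[OF ws, unfolded split_count_matrices_def]) simp_all
qed

end
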